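(* Let $G$ be a group, and on the set $G$ define $a*b=b^{-1}ab$ (the conjugation quandle $\mathrm{Conj}(G)$) and $a\circ b=ba^{-1}b$ (the core quandle $\mathrm{Core}(G)$). Then for all $a,b,c\in G$, $$(a\circ b)*c=(a*c)\circ(b*c).$$ Moreover, if $g^2$ lies in the center of $G$ for every $g\in G$, then for all $a,b,c\in G$, $$(a*b)\circ c=(a\circ c)*(b\circ c).$$ *)

theory Defs
  imports "HOL-Algebra.Group"
begin

definition conj_op :: "('a, 'b) monoid_scheme \<Rightarrow> 'a \<Rightarrow> 'a \<Rightarrow> 'a" where
  "conj_op G a b = inv\<^bsub>G\<^esub> b \<otimes>\<^bsub>G\<^esub> a \<otimes>\<^bsub>G\<^esub> b"

definition core_op :: "('a, 'b) monoid_scheme \<Rightarrow> 'a \<Rightarrow> 'a \<Rightarrow> 'a" where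
  "core_op G a b = b \<otimes>\<^bsub>G\<^esub> inv\<^bsub>G\<^esub> a \<otimes>\<^bsub>G\<^esub> b"

definition group_center :: "('a, 'b) monoid_scheme \<Rightarrow> 'a set" where
  "group_center G = {z \<in> carrier G. \<forall>x\<in>carrier G. z \<otimes>\<^bsub>G\<^esub> x = x \<otimes>\<^bsub>G\<^esub> z}"

end

theory Submission
  imports Defs
begin

text \<open>The first identity holds because conjugation by c is an endomorphism of G and the core
  operation is a word in the group operations, hence preserved by every homomorphism. For the
  second, expanding the right-hand side produces c^-1 b a^-1 c^2 b^-1 c; moving the central c^2
  to the front leaves c b a^-1 b^-1 c, and conjugation by b agrees with conjugation by b^-1
  whenever b^2 is central.\<close>

lemma (in group) mult_inv_cancel_left:
  "x \<in> carrier G \<Longrightarrow> y \<in> carrier G \<Longrightarrow> x \<otimes> (inv x \<otimes> y) = y"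
  by (simp add: m_assoc[symmetric])

lemma (in group) inv_mult_cancel_left:
  "x \<in> carrier G \<Longrightarrow> y \<in> carrier G \<Longrightarrow> inv x \<otimes> (x \<otimes> y) = y"
  by (simp add: m_assoc[symmetric])

lemma (in group_hom) hom_core_op:
  assumes "a \<in> carrier G" "b \<in> carrier G"
  shows "h (core_op G a b) = core_op H (h a) (h b)"
  using assms by (simp add: core_op_def)

lemma (in group) conj_op_closed [simp]:
  "x \<in> carrier G \<Longrightarrow> c \<in> carrier G \<Longrightarrow> conj_op G x c \<in> carrier G"
  by (simp add: conj_op_def)

lemma (in group) conj_op_mult:
  assumes "x \<in> carrier G" "y \<in> carrier G" "c \<in> carrier G"
  shows "conj_op G (x \<otimes> y) c = conj_op G x c \<otimes> conj_op G y c"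
proof -
  have "inv c \<otimes> (x \<otimes> y) \<otimes> c = inv c \<otimes> x \<otimes> (c \<otimes> inv c) \<otimes> y \<otimes> c"
    using assms by (simp add: m_assoc)
  also have "\<dots> = conj_op G x c \<otimes> conj_op G y c"
    using assms by (simp add: conj_op_def m_assoc mult_inv_cancel_left)
  finally show ?thesis
    by (simp add: conj_op_def)
qed

lemma (in group) group_hom_conj_op:
  assumes "c \<in> carrier G"
  shows "group_hom G G (\<lambda>x. conj_op G x c)"
proof -
  have "(\<lambda>x. conj_op G x c) \<in> hom G G"
    using assms by (intro homI) (simp_all add: conj_op_mult)
  then show ?thesis
    by (simp add: group_hom_def group_hom_axioms_def is_group)
qed

lemma (in group) conj_op_core_op:
  assumes "a \<in> carrier G" "b \<in> carrier G" "c \<in> carrier G"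
  shows "conj_op G (core_op G a b) c = core_op G (conj_op G a c) (conj_op G b c)"
  using group_hom.hom_core_op[OF group_hom_conj_op] assms by blast

lemma (in group) group_centerD:
  assumes "z \<in> group_center G" "x \<in> carrier G"
  shows "z \<otimes> x = x \<otimes> z"
  using assms by (simp add: group_center_def)

lemma (in group) conj_by_central_square:
  assumes "b \<otimes> b \<in> group_center G" "x \<in> carrier G" "b \<in> carrier G"
  shows "inv b \<otimes> x \<otimes> b = b \<otimes> x \<otimes> inv b"
proof -
  have "b \<otimes> x \<otimes> inv b = inv b \<otimes> ((b \<otimes> b) \<otimes> x) \<otimes> inv b"
    using assms by (simp add: m_assoc[symmetric])
  also have "\<dots> = inv b \<otimes> (x \<otimes> (b \<otimes> b)) \<otimes> inv b"
    using assms by (simp add: group_centerD)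
  also have "\<dots> = inv b \<otimes> x \<otimes> b"
    using assms by (simp add: m_assoc)
  finally show ?thesis ..
qed

lemma (in group) core_op_conj_op:
  assumes central: "b \<otimes> b \<in> group_center G" "c \<otimes> c \<in> group_center G"
    and carrier: "a \<in> carrier G" "b \<in> carrier G" "c \<in> carrier G"
  shows "core_op G (conj_op G a b) c = conj_op G (core_op G a c) (core_op G b c)"
proof -
  have "conj_op G (core_op G a c) (core_op G b c)
      = inv c \<otimes> b \<otimes> inv a \<otimes> (c \<otimes> c) \<otimes> inv b \<otimes> c"
    using carrier by (simp add: conj_op_def core_op_def inv_mult_group m_assoc inv_mult_cancel_left)
  also have "\<dots> = inv c \<otimes> (b \<otimes> inv a \<otimes> (c \<otimes> c)) \<otimes> inv b \<otimes> c"
    using carrier by (simp add: m_assoc)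
  also have "\<dots> = inv c \<otimes> ((c \<otimes> c) \<otimes> (b \<otimes> inv a)) \<otimes> inv b \<otimes> c"
    using central carrier by (simp add: group_centerD[of "c \<otimes> c" "b \<otimes> inv a"])
  also have "\<dots> = inv c \<otimes> (c \<otimes> c) \<otimes> (b \<otimes> inv a \<otimes> inv b) \<otimes> c"
    using carrier by (simp add: m_assoc)
  also have "\<dots> = c \<otimes> (b \<otimes> inv a \<otimes> inv b) \<otimes> c"
    using carrier by (simp add: m_assoc inv_mult_cancel_left)
  also have "\<dots> = c \<otimes> (inv b \<otimes> inv a \<otimes> b) \<otimes> c"
    using central carrier by (simp add: conj_by_central_square)
  also have "\<dots> = core_op G (conj_op G a b) c"
    using carrier by (simp add: conj_op_def core_op_def inv_mult_group m_assoc)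
  finally show ?thesis ..
qed

theorem proposition4p17:
  fixes G (structure)
  assumes "group G"
  shows "(\<forall>a\<in>carrier G. \<forall>b\<in>carrier G. \<forall>c\<in>carrier G.
            conj_op G (core_op G a b) c = core_op G (conj_op G a c) (conj_op G b c))
       \<and> ((\<forall>g\<in>carrier G. g \<otimes> g \<in> group_center G) \<longrightarrow>
            (\<forall>a\<in>carrier G. \<forall>b\<in>carrier G. \<forall>c\<in>carrier G.
              core_op G (conj_op G a b) c = conj_op G (core_op G a c) (core_op G b c)))"
proof -
  interpret group G by fact
  show ?thesis
    by (simp add: conj_op_core_op core_op_conj_op)
qed

end
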